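(* Let $n\ge 1$. For a partition $\lambda$ of $n$, let $r_\lambda$ be the number of binary trees with leaf set $[n]=\{1,\dots,n\}$ that are fixed by the relabeling action of a permutation $\sigma\in\mathfrak{S}_n$ of cycle type $\lambda$ (this number depends only on $\lambda$), let $\lambda^2$ denote the cycle type of $\sigma^2$, and let $z_\lambda=\prod_{i\ge1} i^{m_i}m_i!$, where $m_i$ is the number of parts of $\lambda$ equal to $i$. Then the number of unlabeled unordered tanglegrams with $n$ leaves equals \[ \frac12\sum_{\lambda\vdash n}\frac{r_\lambda^2}{z_\lambda}+\frac12\sum_{\lambda\vdash n}\frac{r_{\lambda^2}}{z_\lambda}. \]
   Context: A binary tree with leaf set $A$ is a rooted tree in which every vertex has either zero or two children, the children of a vertex are unordered, the leaves (vertices with no children) are labeled bijectively by the elements of $A$, and the internal vertices are unlabeled; the single-vertex tree (one labeled vertex) counts as a binary tree. Two such trees are the same if there is a root-preserving tree isomorphism between them preserving leaf labels. A permutation $\sigma$ of $[n]$ acts on binary trees with leaf set $[n]$ by replacing each leaf label $i$ with $\sigma(i)$. An unordered tanglegram with leaf set $[n]$ is an unordered pair (a multiset of size two, so the two trees may coincide) of binary trees with leaf set $[n]$; $\mathfrak{S}_n$ acts on these by relabeling both trees simultaneously, and an unlabeled unordered tanglegram with $n$ leaves is an orbit of this action. *)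

theory Defs
  imports Complex_Main "HOL-Library.Multiset" "HOL-Combinatorics.Permutations"
begin

text \<open>Plane representatives of binary trees: leaves labelled by naturals,
  internal vertices have exactly two (here ordered) children.\<close>
datatype tr = Lf nat | Nd tr tr

fun leaves :: "tr \<Rightarrow> nat list" where
  "leaves (Lf a) = [a]"
| "leaves (Nd l r) = leaves l @ leaves r"

fun map_tr :: "(nat \<Rightarrow> nat) \<Rightarrow> tr \<Rightarrow> tr" where
  "map_tr f (Lf a) = Lf (f a)"
| "map_tr f (Nd l r) = Nd (map_tr f l) (map_tr f r)"

inductive tr_iso :: "tr \<Rightarrow> tr \<Rightarrow> bool" where
  "tr_iso (Lf a) (Lf a)"
| "tr_iso l l' \<Longrightarrow> tr_iso r r' \<Longrightarrow> tr_iso (Nd l r) (Nd l' r')"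
| "tr_iso l r' \<Longrightarrow> tr_iso r l' \<Longrightarrow> tr_iso (Nd l r) (Nd l' r')"

definition valid_tr :: "nat set \<Rightarrow> tr \<Rightarrow> bool" where
  "valid_tr A t \<longleftrightarrow> distinct (leaves t) \<and> set (leaves t) = A"

definition BT :: "nat \<Rightarrow> tr set set" where
  "BT n = {t. valid_tr {1..n} t} // {(s, t). tr_iso s t}"

definition act :: "(nat \<Rightarrow> nat) \<Rightarrow> tr set \<Rightarrow> tr set" where
  "act \<sigma> X = map_tr \<sigma> ` X"

text \<open>Unordered tanglegrams with leaf set [n]: multisets of size two of binary trees.\<close>
definition TG :: "nat \<Rightarrow> tr set multiset set" where
  "TG n = {{#X, Y#} | X Y. X \<in> BT n \<and> Y \<in> BT n}"

definition tg_orbit :: "nat \<Rightarrow> tr set multiset \<Rightarrow> tr set multiset set" where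
  "tg_orbit n M = {image_mset (act \<sigma>) M | \<sigma>. \<sigma> permutes {1..n}}"

definition num_tanglegrams :: "nat \<Rightarrow> nat" where
  "num_tanglegrams n = card (tg_orbit n ` TG n)"

definition partitions :: "nat \<Rightarrow> nat multiset set" where
  "partitions n = {lam. (\<forall>x\<in>#lam. 0 < x) \<and> sum_mset lam = n}"

definition perm_orbit :: "(nat \<Rightarrow> nat) \<Rightarrow> nat \<Rightarrow> nat set" where
  "perm_orbit \<sigma> x = {(\<sigma> ^^ k) x | k. True}"

definition cycle_type :: "nat \<Rightarrow> (nat \<Rightarrow> nat) \<Rightarrow> nat multiset" where
  "cycle_type n \<sigma> = image_mset card (mset_set (perm_orbit \<sigma> ` {1..n}))"

definition perm_of_type :: "nat \<Rightarrow> nat multiset \<Rightarrow> (nat \<Rightarrow> nat)" where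
  "perm_of_type n lam = (SOME \<sigma>. \<sigma> permutes {1..n} \<and> cycle_type n \<sigma> = lam)"

definition r_fix :: "nat \<Rightarrow> nat multiset \<Rightarrow> nat" where
  "r_fix n lam = card {X \<in> BT n. act (perm_of_type n lam) X = X}"

definition sq_type :: "nat \<Rightarrow> nat multiset \<Rightarrow> nat multiset" where
  "sq_type n lam = cycle_type n (perm_of_type n lam \<circ> perm_of_type n lam)"

definition z_fac :: "nat multiset \<Rightarrow> nat" where
  "z_fac lam = (\<Prod>i\<in>set_mset lam. i ^ count lam i * fact (count lam i))"

end

theory Submission
  imports Defs "HOL-Algebra.Sym_Groups" "HOL-Algebra.Group_Action"
    "HOL-Combinatorics.Orbits" "HOL-Combinatorics.Cycles"
begin

text \<open>
  By Burnside's lemma, \<open>n!\<close> times the number of tanglegrams is the sum over \<open>\<sigma> \<in> S\<^sub>n\<close> of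
  the number of \<open>\<sigma>\<close>-invariant pairs \<open>{X, Y}\<close>. Such a pair is either a pair of \<open>\<sigma>\<close>-fixed
  trees or a pair \<open>{X, \<sigma> X}\<close> with \<open>X\<close> fixed by \<open>\<sigma>\<^sup>2\<close>; counting ordered pairs, where the
  diagonal is hit by both cases, gives \<open>2 \<cdot> #{invariant pairs} = F(\<sigma>)\<^sup>2 + F(\<sigma>\<^sup>2)\<close> for
  the number \<open>F\<close> of fixed trees. \<open>F\<close> is constant on conjugacy classes, and the class of
  cycle type \<open>\<lambda>\<close> has \<open>n!/z\<^sub>\<lambda>\<close> elements: the permutations conjugating \<open>\<sigma>\<close> to a fixed
  \<open>\<tau>\<close> of the same type are counted by matching the cycles of \<open>\<sigma>\<close> with cycles of \<open>\<tau>\<close> of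
  equal length one at a time, which gives \<open>z\<^sub>\<lambda>\<close> of them.
\<close>

hide_const (open) Group_Action.orbit \<comment> \<open>frees \<open>orbit\<close> for the orbit of a single map (theory \<open>Orbits\<close>)\<close>

section \<open>Relabelling binary trees\<close>

lemma map_tr_comp: "map_tr f (map_tr g t) = map_tr (f \<circ> g) t"
  by (induction t) auto

lemma map_tr_id: "map_tr id t = t"
  by (induction t) auto

lemma leaves_map_tr: "leaves (map_tr f t) = map f (leaves t)"
  by (induction t) auto

lemma leaves_nonempty: "leaves t \<noteq> []"
  by (induction t) auto

lemma tr_iso_map_tr: "tr_iso s t \<Longrightarrow> tr_iso (map_tr f s) (map_tr f t)"
  by (induction rule: tr_iso.induct) (auto intro: tr_iso.intros)

lemma valid_tr_map_tr:
  assumes "\<sigma> permutes A" "valid_tr A t"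
  shows "valid_tr A (map_tr \<sigma> t)"
  using assms permutes_inj[OF assms(1)] permutes_image[OF assms(1)]
  by (auto simp: valid_tr_def leaves_map_tr distinct_map intro: inj_on_subset[of _ UNIV])

lemma BT_image: "BT n = (\<lambda>t. {s. tr_iso t s}) ` {t. valid_tr {1..n} t}"
  unfolding BT_def quotient_def by auto

lemma act_comp: "act (\<sigma> \<circ> \<tau>) X = act \<sigma> (act \<tau> X)"
  unfolding act_def by (auto simp: map_tr_comp[symmetric] image_image)

lemma act_id: "act id X = X"
  unfolding act_def by (auto simp: map_tr_id)

lemma act_inv_cancel:
  assumes "bij \<sigma>"
  shows "act (Hilbert_Choice.inv \<sigma>) (act \<sigma> X) = X" "act \<sigma> (act (Hilbert_Choice.inv \<sigma>) X) = X"
proof -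
  have "Hilbert_Choice.inv \<sigma> \<circ> \<sigma> = id" "\<sigma> \<circ> Hilbert_Choice.inv \<sigma> = id"
    using bij_is_inj[OF assms] bij_is_surj[OF assms] by (simp_all add: surj_iff)
  then show "act (Hilbert_Choice.inv \<sigma>) (act \<sigma> X) = X" "act \<sigma> (act (Hilbert_Choice.inv \<sigma>) X) = X"
    by (metis act_comp act_id)+
qed

lemma act_tr_iso_class:
  assumes "bij \<sigma>"
  shows "act \<sigma> {s. tr_iso t s} = {s. tr_iso (map_tr \<sigma> t) s}"
proof (intro Set.set_eqI HOL.iffI)
  fix u assume "u \<in> act \<sigma> {s. tr_iso t s}"
  then show "u \<in> {s. tr_iso (map_tr \<sigma> t) s}" by (auto simp: act_def tr_iso_map_tr)
next
  fix u assume "u \<in> {s. tr_iso (map_tr \<sigma> t) s}"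
  then have "tr_iso (map_tr (Hilbert_Choice.inv \<sigma>) (map_tr \<sigma> t)) (map_tr (Hilbert_Choice.inv \<sigma>) u)"
    by (auto intro: tr_iso_map_tr)
  moreover have "Hilbert_Choice.inv \<sigma> \<circ> \<sigma> = id" "\<sigma> \<circ> Hilbert_Choice.inv \<sigma> = id"
    using bij_is_inj[OF assms] bij_is_surj[OF assms] by (simp_all add: surj_iff)
  ultimately have "tr_iso t (map_tr (Hilbert_Choice.inv \<sigma>) u)"
    "u = map_tr \<sigma> (map_tr (Hilbert_Choice.inv \<sigma>) u)"
    by (simp_all add: map_tr_comp map_tr_id)
  then show "u \<in> act \<sigma> {s. tr_iso t s}" unfolding act_def by blast
qed

lemma act_in_BT:
  assumes "\<sigma> permutes {1..n}" "X \<in> BT n"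
  shows "act \<sigma> X \<in> BT n"
proof -
  obtain t where "valid_tr {1..n} t" "X = {s. tr_iso t s}"
    using assms(2) unfolding BT_image by blast
  then show ?thesis
    using valid_tr_map_tr[OF assms(1)] act_tr_iso_class[OF permutes_bij[OF assms(1)]]
    unfolding BT_image by auto
qed

lemma finite_trees_leaves_bounded:
  assumes "finite A"
  shows "finite {t. set (leaves t) \<subseteq> A \<and> length (leaves t) \<le> m}"
proof (induction m)
  case 0
  then show ?case using leaves_nonempty by simp
next
  case (Suc m)
  let ?F = "{t. set (leaves t) \<subseteq> A \<and> length (leaves t) \<le> m}"
  have "{t. set (leaves t) \<subseteq> A \<and> length (leaves t) \<le> Suc m} \<subseteq>
        Lf ` A \<union> (\<lambda>(l, r). Nd l r) ` (?F \<times> ?F)"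
  proof
    fix t assume t: "t \<in> {t. set (leaves t) \<subseteq> A \<and> length (leaves t) \<le> Suc m}"
    show "t \<in> Lf ` A \<union> (\<lambda>(l, r). Nd l r) ` (?F \<times> ?F)"
    proof (cases t)
      case (Lf a)
      then show ?thesis using t by auto
    next
      case (Nd l r)
      have "length (leaves l) \<ge> 1" "length (leaves r) \<ge> 1"
        using leaves_nonempty[of l] leaves_nonempty[of r] by (auto simp: Suc_le_eq)
      then show ?thesis using t Nd by force
    qed
  qed
  moreover have "finite (Lf ` A \<union> (\<lambda>(l, r). Nd l r) ` (?F \<times> ?F))"
    using Suc assms by auto
  ultimately show ?case by (rule finite_subset)
qed

lemma finite_BT: "finite (BT n)"
proof -
  have "{t. valid_tr {1..n} t} \<subseteq> {t. set (leaves t) \<subseteq> {1..n} \<and> length (leaves t) \<le> n}"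
    by (auto simp: valid_tr_def dest: distinct_card)
  then have "finite {t. valid_tr {1..n} t}"
    using finite_trees_leaves_bounded[of "{1..n}" n] finite_subset by auto
  then show ?thesis unfolding BT_image by blast
qed

section \<open>Burnside's lemma for tanglegrams\<close>

definition tg_act :: "nat \<Rightarrow> (nat \<Rightarrow> nat) \<Rightarrow> tr set multiset \<Rightarrow> tr set multiset" where
  "tg_act n \<sigma> = (\<lambda>M \<in> TG n. image_mset (act \<sigma>) M)"

lemma image_mset_act_in_TG:
  assumes "\<sigma> permutes {1..n}" "M \<in> TG n"
  shows "image_mset (act \<sigma>) M \<in> TG n"
  using assms act_in_BT unfolding TG_def by fastforce

lemma tg_act_in_Bij:
  assumes "\<sigma> permutes {1..n}"
  shows "tg_act n \<sigma> \<in> Bij (TG n)"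
proof -
  have inv: "Hilbert_Choice.inv \<sigma> permutes {1..n}" using assms by (rule permutes_inv)
  have cancel: "image_mset (act (Hilbert_Choice.inv \<pi>)) (image_mset (act \<pi>) M) = M"
    if "\<pi> permutes {1..n}" for \<pi> M
    using act_inv_cancel(1)[OF permutes_bij[OF that]] by (simp add: multiset.map_comp o_def)
  have "bij_betw (tg_act n \<sigma>) (TG n) (TG n)"
    by (rule bij_betw_byWitness[where f'="tg_act n (Hilbert_Choice.inv \<sigma>)"])
      (use image_mset_act_in_TG[OF assms] image_mset_act_in_TG[OF inv] cancel[OF assms]
        cancel[OF inv] inv_inv_eq[OF permutes_bij[OF assms]] in \<open>auto simp: tg_act_def\<close>)
  then show ?thesis unfolding Bij_def tg_act_def by auto
qed

lemma group_action_tg_act: "group_action (sym_group n) (TG n) (tg_act n)"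
  unfolding group_action_def group_hom_def group_hom_axioms_def
proof (intro conjI)
  show "group (sym_group n)" by (rule sym_group_is_group)
  show "group (BijGroup (TG n))" by (rule group_BijGroup)
  show "tg_act n \<in> hom (sym_group n) (BijGroup (TG n))"
  proof (rule homI)
    fix \<sigma> assume "\<sigma> \<in> carrier (sym_group n)"
    then show "tg_act n \<sigma> \<in> carrier (BijGroup (TG n))"
      using tg_act_in_Bij by (simp add: sym_group_carrier BijGroup_def)
  next
    fix \<sigma> \<tau> assume "\<sigma> \<in> carrier (sym_group n)" "\<tau> \<in> carrier (sym_group n)"
    then have \<sigma>: "\<sigma> permutes {1..n}" and \<tau>: "\<tau> permutes {1..n}"
      by (simp_all add: sym_group_carrier)
    have "image_mset (act (\<sigma> \<circ> \<tau>)) M = image_mset (act \<sigma>) (image_mset (act \<tau>) M)" for M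
      by (induction M) (simp_all add: act_comp[unfolded comp_def])
    then have "tg_act n (\<sigma> \<circ> \<tau>) = compose (TG n) (tg_act n \<sigma>) (tg_act n \<tau>)"
      unfolding tg_act_def compose_def
      by (intro restrict_ext) (use image_mset_act_in_TG[OF \<tau>] in auto)
    then show "tg_act n (\<sigma> \<otimes>\<^bsub>sym_group n\<^esub> \<tau>) = tg_act n \<sigma> \<otimes>\<^bsub>BijGroup (TG n)\<^esub> tg_act n \<tau>"
      using tg_act_in_Bij[OF \<sigma>] tg_act_in_Bij[OF \<tau>] by (simp add: sym_group_mult BijGroup_def)
  qed
qed

lemma finite_TG: "finite (TG n)"
proof -
  have "TG n = (\<lambda>(X, Y). {#X, Y#}) ` (BT n \<times> BT n)" unfolding TG_def by auto
  then show ?thesis using finite_BT by simp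
qed

lemma orbits_tg_act: "orbits (sym_group n) (TG n) (tg_act n) = tg_orbit n ` TG n"
  unfolding orbits_def Group_Action.orbit_def tg_orbit_def
  by (auto simp: sym_group_carrier tg_act_def)

lemma num_tanglegrams_burnside:
  "num_tanglegrams n * fact n =
   (\<Sum>\<sigma> | \<sigma> permutes {1..n}. card {M \<in> TG n. image_mset (act \<sigma>) M = M})"
proof -
  interpret group_action "sym_group n" "TG n" "tg_act n" by (rule group_action_tg_act)
  have carrier: "carrier (sym_group n) = {\<sigma>. \<sigma> permutes {1..n}}"
    by (auto simp: sym_group_carrier)
  have "card (orbits (sym_group n) (TG n) (tg_act n)) * order (sym_group n) =
        (\<Sum>\<sigma> \<in> carrier (sym_group n). card (invariants (TG n) (tg_act n) \<sigma>))"
    by (rule burnside) (simp_all add: carrier finite_permutations finite_TG)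
  moreover have "invariants (TG n) (tg_act n) \<sigma> = {M \<in> TG n. image_mset (act \<sigma>) M = M}" for \<sigma>
    by (auto simp: invariants_def tg_act_def)
  ultimately show ?thesis
    using card_permutations[of "{1..n}" n]
    by (simp add: carrier orbits_tg_act num_tanglegrams_def order_def)
qed

section \<open>Invariant unordered pairs\<close>

lemma add_mset_eq_doubleton_iff:
  "{#a, b#} = {#c, d#} \<longleftrightarrow> a = c \<and> b = d \<or> a = d \<and> b = c"
  by (auto simp: add_eq_conv_ex)

lemma card_pairs_add_card_diagonal:
  fixes P :: "('a \<times> 'a) set"
  assumes "finite P" and sym: "\<And>x y. (x, y) \<in> P \<Longrightarrow> (y, x) \<in> P"
  shows "card P + card {x. (x, x) \<in> P} = 2 * card ((\<lambda>(x, y). {#x, y#}) ` P)"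
proof -
  define g :: "'a \<times> 'a \<Rightarrow> 'a multiset" where "g = (\<lambda>(x, y). {#x, y#})"
  define D where "D = {x. (x, x) \<in> P}"
  have "D \<subseteq> fst ` P" by (force simp: D_def)
  then have "finite D" using assms(1) finite_subset by blast
  moreover have "(\<lambda>x. {#x, x#}) ` D \<subseteq> g ` P" by (force simp: D_def g_def)
  ultimately have card_D: "card D = (\<Sum>M \<in> g ` P. card {x \<in> D. {#x, x#} = M})"
    using sum.group[where S = D and T = "g ` P" and g = "\<lambda>x. {#x, x#}" and h = "\<lambda>_. 1 :: nat"]
      assms(1) by simp
  have card_P: "card P = (\<Sum>M \<in> g ` P. card {p \<in> P. g p = M})"
    using sum.image_gen[OF assms(1), where h = "\<lambda>_. 1 :: nat" and g = g] by simp
  have fibres: "card {p \<in> P. g p = M} + card {x \<in> D. {#x, x#} = M} = 2" if M: "M \<in> g ` P" for M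
  proof -
    obtain x y where xy: "(x, y) \<in> P" "M = {#x, y#}" using M by (auto simp: g_def)
    show ?thesis
    proof (cases "x = y")
      case True
      then have "{p \<in> P. g p = M} = {(x, x)}" "{z \<in> D. {#z, z#} = M} = {x}"
        using xy by (auto simp: g_def D_def add_mset_eq_doubleton_iff)
      then show ?thesis by simp
    next
      case False
      then have pairs: "{p \<in> P. g p = M} = {(x, y), (y, x)}"
        and diagonal: "{z \<in> D. {#z, z#} = M} = {}"
        using xy sym by (auto simp: g_def D_def add_mset_eq_doubleton_iff)
      show ?thesis unfolding pairs diagonal using False by simp
    qed
  qed
  have "card P + card D = (\<Sum>M \<in> g ` P. card {p \<in> P. g p = M} + card {x \<in> D. {#x, x#} = M})"
    unfolding card_P card_D by (rule sum.distrib[symmetric])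
  also have "\<dots> = 2 * card (g ` P)" using fibres by simp
  finally show ?thesis by (simp add: D_def g_def)
qed

lemma card_invariant_doubletons:
  assumes "finite A" "f ` A \<subseteq> A"
  shows "2 * card {M. \<exists>x\<in>A. \<exists>y\<in>A. M = {#x, y#} \<and> image_mset f M = M}
         = card {x \<in> A. f x = x} ^ 2 + card {x \<in> A. f (f x) = x}"
proof -
  define F where "F = {x \<in> A. f x = x}"
  define B where "B = (\<lambda>x. (x, f x)) ` {x \<in> A. f (f x) = x}"
  define P where "P = {(x, y). x \<in> A \<and> y \<in> A \<and> {#f x, f y#} = {#x, y#}}"
  have P_decomp: "P = F \<times> F \<union> B"
    using assms(2) by (auto simp: P_def F_def B_def add_mset_eq_doubleton_iff image_iff)
  have "F \<times> F \<inter> B = (\<lambda>x. (x, x)) ` F"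
    by (auto simp: F_def B_def)
  then have "card (F \<times> F) + card B = card P + card F"
    using card_Un_Int[of "F \<times> F" B] P_decomp assms(1)
    by (simp add: F_def B_def card_image inj_on_def)
  moreover have "card B = card {x \<in> A. f (f x) = x}"
    unfolding B_def by (rule card_image) (auto intro: inj_onI)
  moreover have "card P + card F = 2 * card ((\<lambda>(x, y). {#x, y#}) ` P)"
  proof -
    have "{x. (x, x) \<in> P} = F"
      by (auto simp: P_def F_def) (metis add_mset_eq_doubleton_iff)
    moreover have "finite P" using assms(1) by (auto simp: P_decomp F_def B_def)
    ultimately show ?thesis
      using card_pairs_add_card_diagonal[of P] by (auto simp: P_def add_mset_commute)
  qed
  moreover have "(\<lambda>(x, y). {#x, y#}) ` P = {M. \<exists>x\<in>A. \<exists>y\<in>A. M = {#x, y#} \<and> image_mset f M = M}"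
    by (auto simp: P_def image_iff)
  ultimately show ?thesis
    by (simp add: power2_eq_square card_cartesian_product F_def)
qed

definition num_fixed_trees :: "nat \<Rightarrow> (nat \<Rightarrow> nat) \<Rightarrow> nat" where
  "num_fixed_trees n \<sigma> = card {X \<in> BT n. act \<sigma> X = X}"

lemma card_fixed_tanglegrams:
  assumes "\<sigma> permutes {1..n}"
  shows "2 * card {M \<in> TG n. image_mset (act \<sigma>) M = M}
         = num_fixed_trees n \<sigma> ^ 2 + num_fixed_trees n (\<sigma> \<circ> \<sigma>)"
proof -
  have "{M \<in> TG n. image_mset (act \<sigma>) M = M}
        = {M. \<exists>X\<in>BT n. \<exists>Y\<in>BT n. M = {#X, Y#} \<and> image_mset (act \<sigma>) M = M}"
    by (auto simp: TG_def)
  then show ?thesis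
    using card_invariant_doubletons[OF finite_BT, of "act \<sigma>" n] act_in_BT[OF assms]
    by (auto simp: num_fixed_trees_def act_comp)
qed

section \<open>Cycle types and intertwining permutations\<close>

definition cycle_type_on :: "'a set \<Rightarrow> ('a \<Rightarrow> 'a) \<Rightarrow> nat multiset" where
  "cycle_type_on S \<sigma> = image_mset card (mset_set (orbit \<sigma> ` S))"

text \<open>
  Intertwiners are normalised to the identity outside \<open>S\<close>, so that they are determined by
  their values on \<open>S\<close>.
\<close>
definition intertwiners :: "'a set \<Rightarrow> ('a \<Rightarrow> 'a) \<Rightarrow> 'a set \<Rightarrow> ('a \<Rightarrow> 'a) \<Rightarrow> ('a \<Rightarrow> 'a) set" where
  "intertwiners S \<sigma> T \<tau> =
     {\<pi>. bij_betw \<pi> S T \<and> (\<forall>x\<in>S. \<pi> (\<sigma> x) = \<tau> (\<pi> x)) \<and> (\<forall>x. x \<notin> S \<longrightarrow> \<pi> x = x)}"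

lemma cycle_type_eq_cycle_type_on:
  assumes "\<sigma> permutes {1..n}"
  shows "cycle_type n \<sigma> = cycle_type_on {1..n} \<sigma>"
proof -
  have "permutation \<sigma>" using assms permutation_permutes by blast
  then have "perm_orbit \<sigma> = orbit \<sigma>"
    by (simp add: fun_eq_iff perm_orbit_def orbit_altdef_permutation)
  then show ?thesis by (simp add: cycle_type_def cycle_type_on_def)
qed

lemma orbit_eq_of_mem: "permutation \<sigma> \<Longrightarrow> y \<in> orbit \<sigma> x \<Longrightarrow> orbit \<sigma> y = orbit \<sigma> x"
  using cyclic_on_orbit' orbit_cyclic_eq3 by metis

lemma pairwise_disjnt_orbits: "permutation \<sigma> \<Longrightarrow> pairwise disjnt (orbit \<sigma> ` S)"
  unfolding pairwise_def disjnt_def by (metis disjoint_iff orbit_eq_of_mem imageE)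

lemma finite_orbit_permutation: "permutation \<sigma> \<Longrightarrow> finite (orbit \<sigma> x)"
  by (simp add: finite_orbit permutation_self_in_orbit)

lemma card_orbit_pos: "permutation \<sigma> \<Longrightarrow> card (orbit \<sigma> x) > 0"
  using finite_orbit_permutation[of \<sigma> x] orbit_nonempty[of \<sigma> x] by (simp add: card_gt_0_iff)

lemma orbit_subset_invariant:
  assumes "\<sigma> ` S \<subseteq> S" "x \<in> S"
  shows "orbit \<sigma> x \<subseteq> S"
proof
  fix y assume "y \<in> orbit \<sigma> x"
  then show "y \<in> S" by induction (use assms in auto)
qed

lemma funpow_eq_iff_mod_card_orbit:
  assumes "permutation \<sigma>"
  shows "(\<sigma> ^^ i) x = (\<sigma> ^^ j) x \<longleftrightarrow> i mod card (orbit \<sigma> x) = j mod card (orbit \<sigma> x)"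
proof -
  let ?p = "funpow_dist1 \<sigma> x x"
  have self: "x \<in> orbit \<sigma> x" using assms by (rule permutation_self_in_orbit)
  have inj: "inj_on (\<lambda>n. (\<sigma> ^^ n) x) {0..<?p}" by (rule inj_on_funpow_dist1[OF self])
  have card: "card (orbit \<sigma> x) = ?p"
    using inj by (simp add: orbit_conv_funpow_dist1[OF self] card_image)
  have "(\<sigma> ^^ i) x = (\<sigma> ^^ (i mod ?p)) x" "(\<sigma> ^^ j) x = (\<sigma> ^^ (j mod ?p)) x"
    using funpow_mod_eq[OF funpow_dist1_prop[OF self]] by metis+
  moreover have "(\<sigma> ^^ (i mod ?p)) x = (\<sigma> ^^ (j mod ?p)) x \<longleftrightarrow> i mod ?p = j mod ?p"
    using inj unfolding inj_on_def by auto
  ultimately show ?thesis using card by simp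
qed

lemma invariant_Diff_orbit:
  assumes "permutation \<sigma>" "\<sigma> ` S \<subseteq> S"
  shows "\<sigma> ` (S - orbit \<sigma> a) \<subseteq> S - orbit \<sigma> a"
proof
  fix z assume "z \<in> \<sigma> ` (S - orbit \<sigma> a)"
  then obtain y where y: "y \<in> S" "y \<notin> orbit \<sigma> a" "z = \<sigma> y" by auto
  have "\<sigma> y \<notin> orbit \<sigma> a"
  proof
    assume "\<sigma> y \<in> orbit \<sigma> a"
    then have "orbit \<sigma> a = orbit \<sigma> y"
      using orbit_eq_of_mem[OF assms(1)] permutation_orbit_step[OF assms(1)] by metis
    then show False using y permutation_self_in_orbit[OF assms(1), of y] by simp
  qed
  then show "z \<in> S - orbit \<sigma> a" using y assms(2) by auto
qed

lemma cycle_type_on_Diff_orbit: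
  assumes "permutation \<sigma>" "\<sigma> ` S \<subseteq> S" "a \<in> S" "finite S"
  shows "cycle_type_on (S - orbit \<sigma> a) \<sigma> = cycle_type_on S \<sigma> - {#card (orbit \<sigma> a)#}"
proof -
  have orbits: "orbit \<sigma> ` (S - orbit \<sigma> a) = orbit \<sigma> ` S - {orbit \<sigma> a}"
    using orbit_eq_of_mem[OF assms(1)] permutation_self_in_orbit[OF assms(1)]
      orbit_subset_invariant[OF assms(2)] by blast
  have fin: "finite (orbit \<sigma> ` S)" using assms(4) by simp
  have "mset_set (orbit \<sigma> ` (S - orbit \<sigma> a)) = mset_set (orbit \<sigma> ` S) - {#orbit \<sigma> a#}"
    using orbits mset_set_Diff[OF fin, of "{orbit \<sigma> a}"] assms(3) by simp
  moreover have "{#orbit \<sigma> a#} \<subseteq># mset_set (orbit \<sigma> ` S)" using assms(3) fin by simp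
  ultimately show ?thesis unfolding cycle_type_on_def by (simp add: image_mset_Diff)
qed

lemma count_cycle_type_on:
  assumes "finite S"
  shows "count (cycle_type_on S \<sigma>) k = card {C \<in> orbit \<sigma> ` S. card C = k}"
proof -
  have "count (cycle_type_on S \<sigma>) k = (\<Sum>C \<in> card -` {k} \<inter> orbit \<sigma> ` S. 1)"
    unfolding cycle_type_on_def count_image_mset using assms by (intro sum.cong) auto
  then show ?thesis by (simp add: Int_commute Collect_conj_eq vimage_def)
qed

lemma card_points_on_cycles_of_length:
  assumes "permutation \<sigma>" "\<sigma> ` S \<subseteq> S" "finite S"
  shows "card {x \<in> S. card (orbit \<sigma> x) = k} = k * count (cycle_type_on S \<sigma>) k"
proof -
  let ?O = "{C \<in> orbit \<sigma> ` S. card C = k}"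
  have eq: "{x \<in> S. card (orbit \<sigma> x) = k} = \<Union> ?O"
  proof (intro Set.set_eqI HOL.iffI)
    fix x assume "x \<in> {x \<in> S. card (orbit \<sigma> x) = k}"
    then show "x \<in> \<Union> ?O" using permutation_self_in_orbit[OF assms(1), of x] by auto
  next
    fix x assume "x \<in> \<Union> ?O"
    then obtain y where "y \<in> S" "x \<in> orbit \<sigma> y" "card (orbit \<sigma> y) = k" by auto
    moreover from this have "x \<in> S" using orbit_subset_invariant[OF assms(2)] by blast
    moreover from calculation have "orbit \<sigma> x = orbit \<sigma> y" using orbit_eq_of_mem[OF assms(1)] by simp
    ultimately show "x \<in> {x \<in> S. card (orbit \<sigma> x) = k}" by simp
  qed
  have pw: "pairwise disjnt ?O"
    by (rule pairwise_subset[OF pairwise_disjnt_orbits[OF assms(1)]]) auto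
  have fin: "\<And>C. C \<in> ?O \<Longrightarrow> finite C" using finite_orbit_permutation[OF assms(1)] by auto
  have "card (\<Union> ?O) = (\<Sum>C\<in>?O. card C)"
    by (rule card_Union_disjoint[OF pw fin])
  also have "\<dots> = (\<Sum>C\<in>?O. k)" by simp
  also have "\<dots> = k * card ?O" by simp
  finally have "card (\<Union> ?O) = k * card ?O" .
  then show ?thesis unfolding eq count_cycle_type_on[OF assms(3)] .
qed

lemma zero_not_in_cycle_type_on:
  assumes "permutation \<sigma>" "finite S"
  shows "0 \<notin># cycle_type_on S \<sigma>"
proof
  assume "0 \<in># cycle_type_on S \<sigma>"
  then obtain x where "card (orbit \<sigma> x) = 0" using assms(2) by (auto simp: cycle_type_on_def)
  then show False using card_orbit_pos[OF assms(1), of x] by simp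
qed

lemma cycle_type_on_empty_iff: "finite S \<Longrightarrow> cycle_type_on S \<sigma> = {#} \<longleftrightarrow> S = {}"
  by (auto simp: cycle_type_on_def mset_set_empty_iff)

lemma z_fac_pos: "0 \<notin># lam \<Longrightarrow> z_fac lam > 0"
  unfolding z_fac_def by (rule prod_pos) (auto intro: gr0I)

lemma z_fac_remove:
  assumes "k \<in># lam"
  shows "z_fac lam = k * count lam k * z_fac (lam - {#k#})"
proof -
  let ?L = "lam - {#k#}"
  define f where "f L i = i ^ count L i * fact (count L i)" for L :: "nat multiset" and i
  have z_fac_f: "z_fac L = (\<Prod>i\<in>set_mset L. f L i)" for L unfolding z_fac_def f_def by simp
  obtain c where c: "count lam k = Suc c"
    using assms by (metis count_greater_zero_iff not0_implies_Suc gr_implies_not0)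
  have count_L: "count ?L i = (if i = k then c else count lam i)" for i using c by auto
  have "z_fac ?L = (\<Prod>i\<in>set_mset lam. f ?L i)"
    unfolding z_fac_f
  proof (rule prod.mono_neutral_left)
    show "set_mset ?L \<subseteq> set_mset lam" by (meson in_diffD subsetI)
    show "\<forall>i\<in>set_mset lam - set_mset ?L. f ?L i = 1" by (auto simp: f_def not_in_iff)
  qed simp
  also have "\<dots> = f ?L k * (\<Prod>i\<in>set_mset lam - {k}. f ?L i)"
    using assms by (simp add: prod.remove)
  also have "(\<Prod>i\<in>set_mset lam - {k}. f ?L i) = (\<Prod>i\<in>set_mset lam - {k}. f lam i)"
    by (rule prod.cong) (auto simp: f_def count_L)
  finally have z_fac_L: "z_fac ?L = f ?L k * (\<Prod>i\<in>set_mset lam - {k}. f lam i)" .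
  have "z_fac lam = f lam k * (\<Prod>i\<in>set_mset lam - {k}. f lam i)"
    unfolding z_fac_f using assms by (simp add: prod.remove)
  moreover have "f lam k = k * count lam k * f ?L k"
    unfolding f_def using c count_L[of k] by (simp add: algebra_simps)
  ultimately show ?thesis using z_fac_L by simp
qed

lemma intertwiner_image_orbit:
  assumes "\<pi> \<in> intertwiners S \<sigma> T \<tau>" "x \<in> S" "\<sigma> ` S \<subseteq> S" "permutation \<sigma>"
  shows "\<pi> ` orbit \<sigma> x = orbit \<tau> (\<pi> x)"
proof (rule orbit_inverse)
  show "x \<in> orbit \<sigma> x" by (rule permutation_self_in_orbit[OF assms(4)])
  fix y assume "y \<in> orbit \<sigma> x"
  then have "y \<in> S" using orbit_subset_invariant[OF assms(3,2)] by blast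
  then show "\<tau> (\<pi> y) = \<pi> (\<sigma> y)" using assms(1) by (simp add: intertwiners_def)
qed

lemma card_orbit_intertwiner:
  assumes "\<pi> \<in> intertwiners S \<sigma> T \<tau>" "x \<in> S" "\<sigma> ` S \<subseteq> S" "permutation \<sigma>"
  shows "card (orbit \<tau> (\<pi> x)) = card (orbit \<sigma> x)"
proof -
  have "inj_on \<pi> (orbit \<sigma> x)"
    using assms(1) orbit_subset_invariant[OF assms(3,2)]
    by (auto simp: intertwiners_def bij_betw_def intro: inj_on_subset)
  then show ?thesis by (simp flip: intertwiner_image_orbit[OF assms] add: card_image)
qed

lemma cycle_type_on_intertwiner:
  assumes "\<pi> \<in> intertwiners S \<sigma> T \<tau>" "\<sigma> ` S \<subseteq> S" "permutation \<sigma>" "finite S"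
  shows "cycle_type_on S \<sigma> = cycle_type_on T \<tau>"
proof -
  have "bij_betw \<pi> S T" using assms(1) by (simp add: intertwiners_def)
  then have T: "T = \<pi> ` S" and inj: "inj_on \<pi> S" by (auto simp: bij_betw_def)
  have orbits: "orbit \<tau> ` T = image \<pi> ` orbit \<sigma> ` S"
    using intertwiner_image_orbit[OF assms(1) _ assms(2,3)] T by (auto simp: image_iff)
  have sub: "C \<subseteq> S" if "C \<in> orbit \<sigma> ` S" for C
    using that orbit_subset_invariant[OF assms(2)] by auto
  have "inj_on (image \<pi>) (orbit \<sigma> ` S)"
    by (rule inj_onI) (use sub inj in \<open>meson inj_on_image_eq_iff\<close>)
  then have "cycle_type_on T \<tau> = image_mset card (image_mset (image \<pi>) (mset_set (orbit \<sigma> ` S)))"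
    unfolding cycle_type_on_def orbits by (simp only: image_mset_mset_set)
  also have "\<dots> = image_mset (\<lambda>C. card (\<pi> ` C)) (mset_set (orbit \<sigma> ` S))"
    by (simp add: multiset.map_comp o_def)
  also have "\<dots> = cycle_type_on S \<sigma>"
    unfolding cycle_type_on_def
    by (rule image_mset_cong) (use sub assms(4) inj in \<open>auto intro: card_image inj_on_subset\<close>)
  finally show ?thesis ..
qed

lemma intertwiner_funpow:
  assumes "\<pi> \<in> intertwiners S \<sigma> T \<tau>" "\<sigma> ` S \<subseteq> S" "x \<in> S"
  shows "\<pi> ((\<sigma> ^^ i) x) = (\<tau> ^^ i) (\<pi> x)"
proof (induction i)
  case (Suc i)
  have "(\<sigma> ^^ i) x \<in> S" using assms(2,3) by (induction i) auto
  then show ?case using Suc assms(1) by (simp add: intertwiners_def)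
qed simp

text \<open>
  Intertwiners sending \<open>a\<close> to \<open>b\<close> correspond to intertwiners of the complements of the
  orbits of \<open>a\<close> and \<open>b\<close>: the map on the orbit is forced to be \<open>\<sigma>\<^sup>i a \<mapsto> \<tau>\<^sup>i b\<close>, which is
  well defined and bijective exactly because the two orbits have the same length.
\<close>
locale orbit_matching =
  fixes \<sigma> \<tau> :: "'a \<Rightarrow> 'a" and S T :: "'a set" and a b :: 'a
  assumes perm_\<sigma>: "permutation \<sigma>" and perm_\<tau>: "permutation \<tau>"
    and invariant_S: "\<sigma> ` S \<subseteq> S" and invariant_T: "\<tau> ` T \<subseteq> T"
    and a_in_S: "a \<in> S" and b_in_T: "b \<in> T"
    and card_orbit_eq: "card (orbit \<sigma> a) = card (orbit \<tau> b)"
begin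

definition restrict_orbit :: "('a \<Rightarrow> 'a) \<Rightarrow> 'a \<Rightarrow> 'a" where
  "restrict_orbit \<pi> x = (if x \<in> orbit \<sigma> a then x else \<pi> x)"

definition extend_orbit :: "('a \<Rightarrow> 'a) \<Rightarrow> 'a \<Rightarrow> 'a" where
  "extend_orbit \<pi> x = (if x \<in> orbit \<sigma> a then (\<tau> ^^ funpow_dist \<sigma> a x) b else \<pi> x)"

lemma funpow_a_eq_iff: "(\<sigma> ^^ i) a = (\<sigma> ^^ j) a \<longleftrightarrow> (\<tau> ^^ i) b = (\<tau> ^^ j) b"
  using funpow_eq_iff_mod_card_orbit[OF perm_\<sigma>, of i a j]
    funpow_eq_iff_mod_card_orbit[OF perm_\<tau>, of i b j] card_orbit_eq by simp

lemma mem_orbit_a_iff: "x \<in> orbit \<sigma> a \<longleftrightarrow> (\<exists>i. x = (\<sigma> ^^ i) a)"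
  unfolding orbit_altdef_permutation[OF perm_\<sigma>] by auto

lemma mem_orbit_b_iff: "y \<in> orbit \<tau> b \<longleftrightarrow> (\<exists>i. y = (\<tau> ^^ i) b)"
  unfolding orbit_altdef_permutation[OF perm_\<tau>] by auto

lemma orbit_a_subset: "orbit \<sigma> a \<subseteq> S"
  by (rule orbit_subset_invariant[OF invariant_S a_in_S])

lemma orbit_b_subset: "orbit \<tau> b \<subseteq> T"
  by (rule orbit_subset_invariant[OF invariant_T b_in_T])

lemma extend_orbit_funpow: "extend_orbit \<pi> ((\<sigma> ^^ i) a) = (\<tau> ^^ i) b"
proof -
  have in_orbit: "(\<sigma> ^^ i) a \<in> orbit \<sigma> a" using mem_orbit_a_iff by blast
  then have "(\<sigma> ^^ funpow_dist \<sigma> a ((\<sigma> ^^ i) a)) a = (\<sigma> ^^ i) a"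
    by (rule funpow_dist_prop)
  then have "(\<tau> ^^ funpow_dist \<sigma> a ((\<sigma> ^^ i) a)) b = (\<tau> ^^ i) b"
    using funpow_a_eq_iff by blast
  then show ?thesis using in_orbit by (simp add: extend_orbit_def)
qed

lemma restrict_orbit_mem:
  assumes \<pi>: "\<pi> \<in> intertwiners S \<sigma> T \<tau>" and "\<pi> a = b"
  shows "restrict_orbit \<pi> \<in> intertwiners (S - orbit \<sigma> a) \<sigma> (T - orbit \<tau> b) \<tau>"
proof -
  have bij: "bij_betw \<pi> S T" using \<pi> by (simp add: intertwiners_def)
  have "\<pi> ` orbit \<sigma> a = orbit \<tau> b"
    using intertwiner_image_orbit[OF \<pi> a_in_S invariant_S perm_\<sigma>] assms(2) by simp
  then have "\<pi> ` (S - orbit \<sigma> a) = T - orbit \<tau> b"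
    using bij orbit_a_subset inj_on_image_set_diff[of \<pi> S S "orbit \<sigma> a"]
    by (simp add: bij_betw_def)
  moreover have "inj_on \<pi> (S - orbit \<sigma> a)"
    using bij by (auto simp: bij_betw_def intro: inj_on_subset)
  ultimately have "bij_betw \<pi> (S - orbit \<sigma> a) (T - orbit \<tau> b)" by (simp add: bij_betw_def)
  then have "bij_betw (restrict_orbit \<pi>) (S - orbit \<sigma> a) (T - orbit \<tau> b)"
    by (rule bij_betw_cong[THEN iffD1, rotated]) (auto simp: restrict_orbit_def)
  moreover have "restrict_orbit \<pi> (\<sigma> x) = \<tau> (restrict_orbit \<pi> x)" if "x \<in> S - orbit \<sigma> a" for x
    using that invariant_Diff_orbit[OF perm_\<sigma> invariant_S, of a] \<pi>
    by (auto simp: restrict_orbit_def intertwiners_def)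
  moreover have "restrict_orbit \<pi> x = x" if "x \<notin> S - orbit \<sigma> a" for x
    using that \<pi> by (auto simp: restrict_orbit_def intertwiners_def)
  ultimately show ?thesis by (simp add: intertwiners_def)
qed

lemma extend_orbit_bij_betw:
  assumes "bij_betw \<pi> (S - orbit \<sigma> a) (T - orbit \<tau> b)"
  shows "bij_betw (extend_orbit \<pi>) S T"
proof -
  have "inj_on (extend_orbit \<pi>) (orbit \<sigma> a)"
  proof (rule inj_onI)
    fix x y assume "x \<in> orbit \<sigma> a" "y \<in> orbit \<sigma> a" "extend_orbit \<pi> x = extend_orbit \<pi> y"
    moreover obtain i j where "x = (\<sigma> ^^ i) a" "y = (\<sigma> ^^ j) a"
      using mem_orbit_a_iff \<open>x \<in> orbit \<sigma> a\<close> \<open>y \<in> orbit \<sigma> a\<close> by blast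
    ultimately show "x = y" using extend_orbit_funpow funpow_a_eq_iff by metis
  qed
  moreover have "extend_orbit \<pi> ` orbit \<sigma> a = orbit \<tau> b"
    using extend_orbit_funpow mem_orbit_a_iff mem_orbit_b_iff by (auto simp: image_iff) metis+
  ultimately have "bij_betw (extend_orbit \<pi>) (orbit \<sigma> a) (orbit \<tau> b)" by (simp add: bij_betw_def)
  moreover have "bij_betw (extend_orbit \<pi>) (S - orbit \<sigma> a) (T - orbit \<tau> b)"
    using assms by (rule bij_betw_cong[THEN iffD1, rotated]) (simp add: extend_orbit_def)
  ultimately have "bij_betw (extend_orbit \<pi>) (orbit \<sigma> a \<union> (S - orbit \<sigma> a)) (orbit \<tau> b \<union> (T - orbit \<tau> b))"
    by (rule bij_betw_combine) blast
  moreover have "orbit \<sigma> a \<union> (S - orbit \<sigma> a) = S" "orbit \<tau> b \<union> (T - orbit \<tau> b) = T"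
    using orbit_a_subset orbit_b_subset by blast+
  ultimately show ?thesis by simp
qed

lemma extend_orbit_intertwines:
  assumes "\<forall>x \<in> S - orbit \<sigma> a. \<pi> (\<sigma> x) = \<tau> (\<pi> x)" "x \<in> S"
  shows "extend_orbit \<pi> (\<sigma> x) = \<tau> (extend_orbit \<pi> x)"
proof (cases "x \<in> orbit \<sigma> a")
  case True
  then obtain i where "x = (\<sigma> ^^ i) a" using mem_orbit_a_iff by blast
  then show ?thesis using extend_orbit_funpow[of \<pi> "Suc i"] extend_orbit_funpow[of \<pi> i] by simp
next
  case False
  then have "x \<in> S - orbit \<sigma> a" "\<sigma> x \<in> S - orbit \<sigma> a"
    using assms(2) invariant_Diff_orbit[OF perm_\<sigma> invariant_S, of a] by auto
  then show ?thesis using assms(1) by (simp add: extend_orbit_def)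
qed

lemma extend_orbit_mem:
  assumes \<pi>: "\<pi> \<in> intertwiners (S - orbit \<sigma> a) \<sigma> (T - orbit \<tau> b) \<tau>"
  shows "extend_orbit \<pi> \<in> intertwiners S \<sigma> T \<tau>" "extend_orbit \<pi> a = b"
proof -
  show "extend_orbit \<pi> a = b" using extend_orbit_funpow[of \<pi> 0] by simp
  have "extend_orbit \<pi> x = x" if "x \<notin> S" for x
    using that \<pi> orbit_a_subset by (auto simp: extend_orbit_def intertwiners_def)
  then show "extend_orbit \<pi> \<in> intertwiners S \<sigma> T \<tau>"
    using \<pi> extend_orbit_bij_betw extend_orbit_intertwines by (simp add: intertwiners_def)
qed

lemma card_intertwiners_mapping:
  "card {\<pi> \<in> intertwiners S \<sigma> T \<tau>. \<pi> a = b}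
   = card (intertwiners (S - orbit \<sigma> a) \<sigma> (T - orbit \<tau> b) \<tau>)"
proof -
  have extend_restrict: "extend_orbit (restrict_orbit \<pi>) = \<pi>"
    if "\<pi> \<in> intertwiners S \<sigma> T \<tau>" "\<pi> a = b" for \<pi>
  proof
    fix x show "extend_orbit (restrict_orbit \<pi>) x = \<pi> x"
    proof (cases "x \<in> orbit \<sigma> a")
      case True
      then obtain i where "x = (\<sigma> ^^ i) a" using mem_orbit_a_iff by blast
      then show ?thesis
        using extend_orbit_funpow intertwiner_funpow[OF that(1) invariant_S a_in_S] that(2) by simp
    next
      case False
      then show ?thesis by (simp add: extend_orbit_def restrict_orbit_def)
    qed
  qed
  have restrict_extend: "restrict_orbit (extend_orbit \<pi>) = \<pi>"
    if "\<pi> \<in> intertwiners (S - orbit \<sigma> a) \<sigma> (T - orbit \<tau> b) \<tau>" for \<pi>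
    using that by (auto simp: fun_eq_iff restrict_orbit_def extend_orbit_def intertwiners_def)
  have "bij_betw restrict_orbit {\<pi> \<in> intertwiners S \<sigma> T \<tau>. \<pi> a = b}
          (intertwiners (S - orbit \<sigma> a) \<sigma> (T - orbit \<tau> b) \<tau>)"
    by (rule bij_betw_byWitness[where f' = extend_orbit])
      (use extend_restrict restrict_extend restrict_orbit_mem extend_orbit_mem in auto)
  then show ?thesis by (rule bij_betw_same_card)
qed

end

lemma intertwiners_eq_UN:
  assumes "a \<in> S" "\<sigma> ` S \<subseteq> S" "permutation \<sigma>"
  shows "intertwiners S \<sigma> T \<tau>
         = (\<Union>b \<in> {b \<in> T. card (orbit \<tau> b) = card (orbit \<sigma> a)}. {\<pi> \<in> intertwiners S \<sigma> T \<tau>. \<pi> a = b})"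
proof (intro Set.set_eqI HOL.iffI)
  fix \<pi> assume \<pi>: "\<pi> \<in> intertwiners S \<sigma> T \<tau>"
  then have "\<pi> a \<in> T" using assms(1) bij_betw_apply unfolding intertwiners_def by fast
  then show "\<pi> \<in> (\<Union>b \<in> {b \<in> T. card (orbit \<tau> b) = card (orbit \<sigma> a)}. {\<pi> \<in> intertwiners S \<sigma> T \<tau>. \<pi> a = b})"
    using \<pi> card_orbit_intertwiner[OF \<pi> assms] by blast
qed auto

lemma card_intertwiners_by_image:
  assumes perm: "permutation \<sigma>" "permutation \<tau>"
    and finite: "finite S" "finite T" and invariant: "\<sigma> ` S \<subseteq> S" "\<tau> ` T \<subseteq> T"
    and types: "cycle_type_on S \<sigma> = cycle_type_on T \<tau>" and a: "a \<in> S"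
    and pieces: "\<And>b. b \<in> T \<Longrightarrow> card (orbit \<tau> b) = card (orbit \<sigma> a) \<Longrightarrow>
      card {\<pi> \<in> intertwiners S \<sigma> T \<tau>. \<pi> a = b} = z_fac (cycle_type_on S \<sigma> - {#card (orbit \<sigma> a)#})"
  shows "card (intertwiners S \<sigma> T \<tau>) = z_fac (cycle_type_on S \<sigma>)"
proof -
  define lam where "lam = cycle_type_on S \<sigma>"
  define k where "k = card (orbit \<sigma> a)"
  define B where "B = {b \<in> T. card (orbit \<tau> b) = k}"
  have pieces_B: "card {\<pi> \<in> intertwiners S \<sigma> T \<tau>. \<pi> a = b} = z_fac (lam - {#k#})" if "b \<in> B" for b
    using that pieces by (simp add: B_def lam_def k_def)
  have k_in: "k \<in># lam" using a finite(1) by (auto simp: lam_def k_def cycle_type_on_def)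
  have "0 \<notin># lam" unfolding lam_def by (rule zero_not_in_cycle_type_on[OF perm(1) finite(1)])
  then have "z_fac (lam - {#k#}) > 0" by (intro z_fac_pos) (meson in_diffD)
  then have pieces_finite: "finite {\<pi> \<in> intertwiners S \<sigma> T \<tau>. \<pi> a = b}" if "b \<in> B" for b
    by (intro card_ge_0_finite) (simp only: pieces_B[OF that])
  have "card (intertwiners S \<sigma> T \<tau>) = card (\<Union>b\<in>B. {\<pi> \<in> intertwiners S \<sigma> T \<tau>. \<pi> a = b})"
    unfolding B_def k_def
    by (rule arg_cong[where f = card, OF intertwiners_eq_UN[OF a invariant(1) perm(1)]])
  also have "\<dots> = (\<Sum>b\<in>B. card {\<pi> \<in> intertwiners S \<sigma> T \<tau>. \<pi> a = b})"
    by (rule card_UN_disjoint) (use finite(2) pieces_finite in \<open>auto simp: B_def\<close>)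
  also have "\<dots> = card B * z_fac (lam - {#k#})" using pieces_B by simp
  also have "card B = k * count lam k"
    unfolding B_def lam_def types
    by (rule card_points_on_cycles_of_length[OF perm(2) invariant(2) finite(2)])
  finally show ?thesis using z_fac_remove[OF k_in] by (simp add: lam_def)
qed

theorem card_intertwiners:
  assumes "permutation \<sigma>" "permutation \<tau>"
    and "finite S" "finite T" "\<sigma> ` S \<subseteq> S" "\<tau> ` T \<subseteq> T" "cycle_type_on S \<sigma> = cycle_type_on T \<tau>"
  shows "card (intertwiners S \<sigma> T \<tau>) = z_fac (cycle_type_on S \<sigma>)"
  using assms(3-)
proof (induction "card S" arbitrary: S T rule: less_induct)
  case less
  note finite_S = less.prems(1) and finite_T = less.prems(2)
    and invariant_S = less.prems(3) and invariant_T = less.prems(4) and types = less.prems(5)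
  show ?case
  proof (cases "S = {}")
    case True
    then have "T = {}" using types cycle_type_on_empty_iff finite_S finite_T by metis
    moreover have "intertwiners {} \<sigma> {} \<tau> = {id}" by (auto simp: intertwiners_def fun_eq_iff)
    ultimately show ?thesis using True by (simp add: cycle_type_on_def z_fac_def)
  next
    case False
    then obtain a where a: "a \<in> S" by blast
    show ?thesis
    proof (rule card_intertwiners_by_image[OF assms(1,2) finite_S finite_T invariant_S invariant_T types a])
      fix b assume b: "b \<in> T" "card (orbit \<tau> b) = card (orbit \<sigma> a)"
      define S' where "S' = S - orbit \<sigma> a"
      define T' where "T' = T - orbit \<tau> b"
      have S': "cycle_type_on S' \<sigma> = cycle_type_on S \<sigma> - {#card (orbit \<sigma> a)#}"
        unfolding S'_def by (rule cycle_type_on_Diff_orbit[OF assms(1) invariant_S a finite_S])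
      have "orbit_matching \<sigma> \<tau> S T a b"
        by unfold_locales (use assms(1,2) invariant_S invariant_T a b in auto)
      then have "card {\<pi> \<in> intertwiners S \<sigma> T \<tau>. \<pi> a = b} = card (intertwiners S' \<sigma> T' \<tau>)"
        unfolding S'_def T'_def by (rule orbit_matching.card_intertwiners_mapping)
      also have "\<dots> = z_fac (cycle_type_on S' \<sigma>)"
      proof (rule less.hyps)
        show "card S' < card S"
          unfolding S'_def using a permutation_self_in_orbit[OF assms(1)] finite_S
          by (intro psubset_card_mono) auto
        show "cycle_type_on S' \<sigma> = cycle_type_on T' \<tau>"
          unfolding S' T'_def cycle_type_on_Diff_orbit[OF assms(2) invariant_T b(1) finite_T]
          using b(2) types by simp
        show "\<sigma> ` S' \<subseteq> S'"
          unfolding S'_def by (rule invariant_Diff_orbit[OF assms(1) invariant_S])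
        show "\<tau> ` T' \<subseteq> T'"
          unfolding T'_def by (rule invariant_Diff_orbit[OF assms(2) invariant_T])
      qed (use finite_S finite_T in \<open>simp_all add: S'_def T'_def\<close>)
      finally show "card {\<pi> \<in> intertwiners S \<sigma> T \<tau>. \<pi> a = b}
          = z_fac (cycle_type_on S \<sigma> - {#card (orbit \<sigma> a)#})"
        unfolding S' .
    qed
  qed
qed

lemma intertwiners_permutes_iff:
  assumes "\<sigma> permutes U" "\<tau> permutes U"
  shows "\<pi> \<in> intertwiners U \<sigma> U \<tau> \<longleftrightarrow> \<pi> permutes U \<and> \<pi> \<circ> \<sigma> = \<tau> \<circ> \<pi>"
proof
  assume \<pi>: "\<pi> \<in> intertwiners U \<sigma> U \<tau>"
  then have "\<pi> permutes U" by (intro bij_imp_permutes) (auto simp: intertwiners_def)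
  moreover have "(\<pi> \<circ> \<sigma>) x = (\<tau> \<circ> \<pi>) x" for x
  proof (cases "x \<in> U")
    case True
    then show ?thesis using \<pi> by (simp add: intertwiners_def)
  next
    case False
    then show ?thesis using assms \<open>\<pi> permutes U\<close> by (simp add: permutes_not_in)
  qed
  ultimately show "\<pi> permutes U \<and> \<pi> \<circ> \<sigma> = \<tau> \<circ> \<pi>" by auto
next
  assume "\<pi> permutes U \<and> \<pi> \<circ> \<sigma> = \<tau> \<circ> \<pi>"
  then show "\<pi> \<in> intertwiners U \<sigma> U \<tau>"
    by (auto simp: intertwiners_def permutes_imp_bij permutes_not_in fun_eq_iff)
qed

lemma permutes_conjugate_if_cycle_type_on_eq:
  assumes "\<sigma> permutes U" "\<tau> permutes U" "finite U" "cycle_type_on U \<sigma> = cycle_type_on U \<tau>"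
  obtains \<pi> where "\<pi> permutes U" "\<pi> \<circ> \<sigma> = \<tau> \<circ> \<pi>"
proof -
  have perm: "permutation \<sigma>" "permutation \<tau>" using assms permutation_permutes by blast+
  have "card (intertwiners U \<sigma> U \<tau>) = z_fac (cycle_type_on U \<sigma>)"
    using card_intertwiners[OF perm assms(3,3) _ _ assms(4)] assms(1,2) by (simp add: permutes_image)
  moreover have "z_fac (cycle_type_on U \<sigma>) > 0"
    by (rule z_fac_pos[OF zero_not_in_cycle_type_on[OF perm(1) assms(3)]])
  ultimately have "intertwiners U \<sigma> U \<tau> \<noteq> {}" by (metis card.empty less_irrefl)
  then show ?thesis using that intertwiners_permutes_iff[OF assms(1,2)] by blast
qed

lemma intertwiner_target_eq:
  assumes "\<rho> permutes U" "\<sigma> permutes U" "\<pi> \<in> intertwiners U \<rho> U \<sigma>"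
  shows "\<sigma> = \<pi> \<circ> \<rho> \<circ> Hilbert_Choice.inv \<pi>"
proof -
  have \<pi>: "\<pi> permutes U" and commute: "\<pi> \<circ> \<rho> = \<sigma> \<circ> \<pi>"
    using assms intertwiners_permutes_iff by blast+
  have "\<sigma> = \<sigma> \<circ> (\<pi> \<circ> Hilbert_Choice.inv \<pi>)" using permutes_inv_o(1)[OF \<pi>] by simp
  also have "\<dots> = (\<sigma> \<circ> \<pi>) \<circ> Hilbert_Choice.inv \<pi>" by (simp only: comp_assoc)
  finally show ?thesis by (simp only: commute)
qed

lemma permutations_eq_UN_intertwiners:
  assumes \<rho>: "\<rho> permutes U" and "finite U"
  shows "{\<pi>. \<pi> permutes U}
         = (\<Union>\<sigma> \<in> {\<sigma>. \<sigma> permutes U \<and> cycle_type_on U \<sigma> = cycle_type_on U \<rho>}. intertwiners U \<rho> U \<sigma>)"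
proof (intro Set.set_eqI HOL.iffI)
  fix \<pi> assume "\<pi> \<in> {\<pi>. \<pi> permutes U}"
  then have \<pi>: "\<pi> permutes U" by simp
  define \<sigma> where "\<sigma> = \<pi> \<circ> \<rho> \<circ> Hilbert_Choice.inv \<pi>"
  have \<sigma>: "\<sigma> permutes U" unfolding \<sigma>_def by (intro permutes_compose permutes_inv \<pi> \<rho>)
  have "\<pi> \<circ> \<rho> = \<sigma> \<circ> \<pi>"
    unfolding \<sigma>_def using permutes_inverses(2)[OF \<pi>] by (auto simp: fun_eq_iff)
  then have \<pi>_in: "\<pi> \<in> intertwiners U \<rho> U \<sigma>" using intertwiners_permutes_iff[OF \<rho> \<sigma>] \<pi> by simp
  moreover have "permutation \<rho>" using \<rho> assms(2) permutation_permutes by blast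
  ultimately have "cycle_type_on U \<rho> = cycle_type_on U \<sigma>"
    using \<rho> assms(2) by (intro cycle_type_on_intertwiner) (auto simp: permutes_image)
  then show "\<pi> \<in> (\<Union>\<sigma> \<in> {\<sigma>. \<sigma> permutes U \<and> cycle_type_on U \<sigma> = cycle_type_on U \<rho>}. intertwiners U \<rho> U \<sigma>)"
    using \<pi>_in \<sigma> by auto
qed (use intertwiners_permutes_iff[OF \<rho>] in auto)

lemma card_cycle_type_on_class:
  assumes \<rho>: "\<rho> permutes U" and "finite U"
  shows "card {\<sigma>. \<sigma> permutes U \<and> cycle_type_on U \<sigma> = cycle_type_on U \<rho>} * z_fac (cycle_type_on U \<rho>)
         = fact (card U)"
proof -
  define CL where "CL = {\<sigma>. \<sigma> permutes U \<and> cycle_type_on U \<sigma> = cycle_type_on U \<rho>}"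
  have perm_\<rho>: "permutation \<rho>" using \<rho> assms(2) permutation_permutes by blast
  have "finite CL"
    using finite_permutations[OF assms(2)] by (rule finite_subset[rotated]) (auto simp: CL_def)
  moreover have "finite (intertwiners U \<rho> U \<sigma>)" if "\<sigma> \<in> CL" for \<sigma>
    using finite_permutations[OF assms(2)] by (rule finite_subset[rotated])
      (use that intertwiners_permutes_iff[OF \<rho>] in \<open>auto simp: CL_def\<close>)
  moreover have "intertwiners U \<rho> U \<sigma>\<^sub>1 \<inter> intertwiners U \<rho> U \<sigma>\<^sub>2 = {}"
    if "\<sigma>\<^sub>1 \<in> CL" "\<sigma>\<^sub>2 \<in> CL" "\<sigma>\<^sub>1 \<noteq> \<sigma>\<^sub>2" for \<sigma>\<^sub>1 \<sigma>\<^sub>2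
  proof (rule ccontr)
    assume "intertwiners U \<rho> U \<sigma>\<^sub>1 \<inter> intertwiners U \<rho> U \<sigma>\<^sub>2 \<noteq> {}"
    then obtain \<pi> where "\<pi> \<in> intertwiners U \<rho> U \<sigma>\<^sub>1" "\<pi> \<in> intertwiners U \<rho> U \<sigma>\<^sub>2" by blast
    then have "\<sigma>\<^sub>1 = \<pi> \<circ> \<rho> \<circ> Hilbert_Choice.inv \<pi>" "\<sigma>\<^sub>2 = \<pi> \<circ> \<rho> \<circ> Hilbert_Choice.inv \<pi>"
      using that(1,2) by (simp_all add: CL_def intertwiner_target_eq[OF \<rho>])
    then show False using that(3) by simp
  qed
  ultimately have "card {\<pi>. \<pi> permutes U} = (\<Sum>\<sigma>\<in>CL. card (intertwiners U \<rho> U \<sigma>))"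
    unfolding permutations_eq_UN_intertwiners[OF \<rho> assms(2)] CL_def[symmetric]
    by (simp add: card_UN_disjoint)
  also have "\<dots> = (\<Sum>\<sigma>\<in>CL. z_fac (cycle_type_on U \<rho>))"
  proof (rule sum.cong[OF refl])
    fix \<sigma> assume "\<sigma> \<in> CL"
    then have \<sigma>: "\<sigma> permutes U" "cycle_type_on U \<rho> = cycle_type_on U \<sigma>" by (auto simp: CL_def)
    have "permutation \<sigma>" using \<sigma>(1) assms(2) permutation_permutes by blast
    with \<rho> \<sigma> assms(2) show "card (intertwiners U \<rho> U \<sigma>) = z_fac (cycle_type_on U \<rho>)"
      by (intro card_intertwiners[OF perm_\<rho>]) (auto simp: permutes_image)
  qed
  finally show ?thesis using card_permutations[OF refl assms(2)] by (simp add: CL_def)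
qed

lemma cycle_type_on_Un:
  assumes "\<sigma> ` A \<subseteq> A" "\<sigma> ` B \<subseteq> B" "A \<inter> B = {}" "finite A" "finite B"
  shows "cycle_type_on (A \<union> B) \<sigma> = cycle_type_on A \<sigma> + cycle_type_on B \<sigma>"
proof -
  have "orbit \<sigma> ` A \<inter> orbit \<sigma> ` B = {}"
  proof (rule ccontr)
    assume "orbit \<sigma> ` A \<inter> orbit \<sigma> ` B \<noteq> {}"
    then obtain x y where "x \<in> A" "y \<in> B" "orbit \<sigma> x = orbit \<sigma> y" by blast
    moreover have "orbit \<sigma> x \<subseteq> A" "orbit \<sigma> y \<subseteq> B"
      using orbit_subset_invariant[OF assms(1) \<open>x \<in> A\<close>] orbit_subset_invariant[OF assms(2) \<open>y \<in> B\<close>]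
      by auto
    ultimately show False using orbit_nonempty[of \<sigma> x] assms(3) by blast
  qed
  then show ?thesis unfolding cycle_type_on_def image_Un
    by (subst mset_set_Union) (use assms in auto)
qed

lemma cycle_type_on_cong:
  assumes "\<sigma> ` A \<subseteq> A" "\<And>x. x \<in> A \<Longrightarrow> \<sigma> x = \<sigma>' x"
  shows "cycle_type_on A \<sigma> = cycle_type_on A \<sigma>'"
proof -
  have "orbit \<sigma> x = orbit \<sigma>' x" if "x \<in> A" for x
    by (rule orbit_cong0[OF that]) (use assms in auto)
  then have "orbit \<sigma> ` A = orbit \<sigma>' ` A" by auto
  then show ?thesis by (simp add: cycle_type_on_def)
qed

lemma cycle_type_on_comp_disjoint:
  assumes "\<sigma> permutes A" "\<tau> permutes B" "A \<inter> B = {}" "finite A" "finite B"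
  shows "cycle_type_on (A \<union> B) (\<sigma> \<circ> \<tau>) = cycle_type_on A \<sigma> + cycle_type_on B \<tau>"
proof -
  have on_A: "(\<sigma> \<circ> \<tau>) x = \<sigma> x" if "x \<in> A" for x
  proof -
    have "x \<notin> B" using that assms(3) by blast
    then show ?thesis by (simp add: permutes_not_in[OF assms(2)])
  qed
  have on_B: "(\<sigma> \<circ> \<tau>) x = \<tau> x" if "x \<in> B" for x
    using that assms(3) permutes_in_image[OF assms(2)] permutes_not_in[OF assms(1)] by auto
  have "\<sigma> ` A \<subseteq> A" "\<tau> ` B \<subseteq> B" using assms(1,2) by (simp_all add: permutes_image)
  then have invariant: "(\<sigma> \<circ> \<tau>) ` A \<subseteq> A" "(\<sigma> \<circ> \<tau>) ` B \<subseteq> B" using on_A on_B by auto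
  show ?thesis
    using cycle_type_on_Un[OF invariant assms(3-5)] cycle_type_on_cong[OF invariant(1) on_A]
      cycle_type_on_cong[OF invariant(2) on_B] by simp
qed

lemma orbit_cycle_of_list:
  assumes "distinct cs" "x \<in> set cs"
  shows "orbit (cycle_of_list cs) x = set cs"
proof
  show "orbit (cycle_of_list cs) x \<subseteq> set cs"
    by (rule permutes_orbit_subset[OF cycle_permutes assms(2)])
  show "set cs \<subseteq> orbit (cycle_of_list cs) x"
  proof
    fix y assume "y \<in> set cs"
    then obtain j where j: "j < length cs" "y = cs ! j" by (metis in_set_conv_nth)
    obtain i where i: "i < length cs" "x = cs ! i" using assms(2) by (metis in_set_conv_nth)
    define n where "n = j + length cs - i"
    have "(cycle_of_list cs ^^ n) x = map (cycle_of_list cs ^^ n) cs ! i" using i by simp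
    also have "\<dots> = rotate n cs ! i" using cyclic_rotation[OF assms(1)] by simp
    also have "\<dots> = cs ! ((n + i) mod length cs)" using i by (simp add: nth_rotate)
    also have "(n + i) mod length cs = j" using i j by (simp add: n_def)
    finally have "(cycle_of_list cs ^^ n) x = y" using j by simp
    then show "y \<in> orbit (cycle_of_list cs) x"
      using funpow_in_orbit[OF permutation_self_in_orbit[OF permutation_of_cycle]] by metis
  qed
qed

lemma cycle_type_on_cycle_of_list:
  assumes "distinct cs" "cs \<noteq> []"
  shows "cycle_type_on (set cs) (cycle_of_list cs) = {#length cs#}"
proof -
  have "orbit (cycle_of_list cs) ` set cs = (\<lambda>_. set cs) ` set cs"
    using orbit_cycle_of_list[OF assms(1)] by simp
  also have "\<dots> = {set cs}" using assms(2) by (cases cs) auto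
  finally have "orbit (cycle_of_list cs) ` set cs = {set cs}" .
  then show ?thesis using distinct_card[OF assms(1)] by (simp add: cycle_type_on_def)
qed

lemma exists_permutes_cycle_type_on:
  "0 \<notin># lam \<Longrightarrow> \<exists>\<sigma>. \<sigma> permutes {1..sum_mset lam} \<and> cycle_type_on {1..sum_mset lam} \<sigma> = lam"
proof (induction lam)
  case empty
  show ?case by (intro exI[of _ id]) (simp add: permutes_id cycle_type_on_def id_def)
next
  case (add k lam)
  define m where "m = sum_mset lam"
  obtain \<sigma> where \<sigma>: "\<sigma> permutes {1..m}" "cycle_type_on {1..m} \<sigma> = lam"
    using add by (auto simp: m_def)
  have "k > 0" using add.prems by auto
  define cs where "cs = [m + 1..<m + k + 1]"
  have cs: "distinct cs" "cs \<noteq> []" "set cs = {m + 1..m + k}" "length cs = k"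
    using \<open>k > 0\<close> by (auto simp: cs_def)
  have c: "cycle_of_list cs permutes {m + 1..m + k}" using cycle_permutes[of cs] cs(3) by simp
  have disjoint: "{1..m} \<inter> {m + 1..m + k} = {}" by auto
  have "\<sigma> \<circ> cycle_of_list cs permutes {1..m} \<union> {m + 1..m + k}"
    by (intro permutes_compose permutes_subset[OF c] permutes_subset[OF \<sigma>(1)]) auto
  moreover have "cycle_type_on ({1..m} \<union> {m + 1..m + k}) (\<sigma> \<circ> cycle_of_list cs) = add_mset k lam"
    using cycle_type_on_comp_disjoint[OF \<sigma>(1) c disjoint] \<sigma>(2)
      cycle_type_on_cycle_of_list[OF cs(1,2)] cs(3,4) by simp
  moreover have "{1..m} \<union> {m + 1..m + k} = {1..sum_mset (add_mset k lam)}"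
    using \<open>k > 0\<close> by (auto simp: m_def)
  ultimately show ?case by metis
qed

lemma cycle_type_on_in_partitions:
  assumes "\<sigma> permutes {1..n}"
  shows "cycle_type_on {1..n} \<sigma> \<in> partitions n"
proof -
  have perm: "permutation \<sigma>" using assms permutation_permutes by blast
  have "\<sigma> ` {1..n} \<subseteq> {1..n}" using assms by (simp add: permutes_image)
  then have "\<Union> (orbit \<sigma> ` {1..n}) = {1..n}"
    using orbit_subset_invariant[of \<sigma> "{1..n}"] permutation_self_in_orbit[OF perm] by blast
  then have "card (\<Union> (orbit \<sigma> ` {1..n})) = n" by simp
  moreover have "card (\<Union> (orbit \<sigma> ` {1..n})) = (\<Sum>C\<in>orbit \<sigma> ` {1..n}. card C)"
    by (rule card_Union_disjoint[OF pairwise_disjnt_orbits[OF perm]])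
      (use finite_orbit_permutation[OF perm] in blast)
  moreover have "sum_mset (cycle_type_on {1..n} \<sigma>) = (\<Sum>C\<in>orbit \<sigma> ` {1..n}. card C)"
    unfolding cycle_type_on_def by (simp add: sum_unfold_sum_mset)
  moreover have "0 < x" if "x \<in># cycle_type_on {1..n} \<sigma>" for x
    using that zero_not_in_cycle_type_on[OF perm, of "{1..n}"] by (auto intro: gr0I)
  ultimately show ?thesis unfolding partitions_def by simp
qed

lemma size_le_sum_mset: "0 \<notin># lam \<Longrightarrow> size lam \<le> sum_mset (lam :: nat multiset)"
proof (induction lam)
  case (add x lam)
  then have "size lam \<le> sum_mset lam" "x \<ge> 1" by (auto simp: Suc_le_eq gr0I)
  then show ?case by simp
qed simp

lemma finite_partitions: "finite (partitions n)"
proof -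
  have "partitions n \<subseteq> mset ` {xs. set xs \<subseteq> {0..n} \<and> length xs \<le> n}"
  proof
    fix lam assume "lam \<in> partitions n"
    then have lam: "0 \<notin># lam" "sum_mset lam = n" by (auto simp: partitions_def)
    obtain xs where xs: "mset xs = lam" using ex_mset by blast
    have "x \<le> n" if "x \<in> set xs" for x
    proof -
      have "x \<in># lam" using that xs by auto
      then show "x \<le> n" using lam(2) by (metis le_add1 sum_mset.remove)
    qed
    moreover have "length xs \<le> n" using size_le_sum_mset[OF lam(1)] lam(2) xs by auto
    ultimately show "lam \<in> mset ` {xs. set xs \<subseteq> {0..n} \<and> length xs \<le> n}" using xs by auto
  qed
  then show ?thesis using finite_lists_length_le[of "{0..n}" n] finite_subset by blast
qed

section \<open>Counting fixed points over conjugacy classes\<close>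

lemma num_fixed_trees_conj_le:
  assumes "\<pi> permutes {1..n}" "\<pi> \<circ> \<sigma> = \<tau> \<circ> \<pi>"
  shows "num_fixed_trees n \<sigma> \<le> num_fixed_trees n \<tau>"
  unfolding num_fixed_trees_def
proof (rule card_inj_on_le)
  show "inj_on (act \<pi>) {X \<in> BT n. act \<sigma> X = X}"
    by (rule inj_onI) (metis act_inv_cancel(1)[OF permutes_bij[OF assms(1)]])
  show "act \<pi> ` {X \<in> BT n. act \<sigma> X = X} \<subseteq> {X \<in> BT n. act \<tau> X = X}"
  proof
    fix Y assume "Y \<in> act \<pi> ` {X \<in> BT n. act \<sigma> X = X}"
    then obtain X where X: "X \<in> BT n" "act \<sigma> X = X" "Y = act \<pi> X" by auto
    have "act \<tau> Y = act (\<tau> \<circ> \<pi>) X" using X by (simp add: act_comp)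
    also have "\<dots> = act \<pi> (act \<sigma> X)" using assms(2) by (simp add: act_comp[symmetric])
    finally show "Y \<in> {X \<in> BT n. act \<tau> X = X}" using X act_in_BT[OF assms(1)] by simp
  qed
  show "finite {X \<in> BT n. act \<tau> X = X}" using finite_BT by simp
qed

lemma num_fixed_trees_conj:
  assumes "\<pi> permutes {1..n}" "\<pi> \<circ> \<sigma> = \<tau> \<circ> \<pi>"
  shows "num_fixed_trees n \<sigma> = num_fixed_trees n \<tau>"
proof -
  have "Hilbert_Choice.inv \<pi> \<circ> \<tau> = \<sigma> \<circ> Hilbert_Choice.inv \<pi>"
  proof
    fix x
    obtain y where y: "x = \<pi> y" using permutes_surj[OF assms(1)] by (metis surj_def)
    have "\<tau> (\<pi> y) = \<pi> (\<sigma> y)" using assms(2) by (metis comp_apply)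
    then show "(Hilbert_Choice.inv \<pi> \<circ> \<tau>) x = (\<sigma> \<circ> Hilbert_Choice.inv \<pi>) x"
      using y permutes_inverses(2)[OF assms(1)] by simp
  qed
  then have "num_fixed_trees n \<tau> \<le> num_fixed_trees n \<sigma>"
    by (rule num_fixed_trees_conj_le[OF permutes_inv[OF assms(1)]])
  moreover have "num_fixed_trees n \<sigma> \<le> num_fixed_trees n \<tau>"
    by (rule num_fixed_trees_conj_le[OF assms])
  ultimately show ?thesis by simp
qed

lemma perm_of_type_cycle_type:
  assumes "\<sigma> permutes {1..n}"
  shows "perm_of_type n (cycle_type n \<sigma>) permutes {1..n}"
    and "cycle_type n (perm_of_type n (cycle_type n \<sigma>)) = cycle_type n \<sigma>"
proof -
  have "\<exists>\<rho>. \<rho> permutes {1..n} \<and> cycle_type n \<rho> = cycle_type n \<sigma>" using assms by blast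
  then have "perm_of_type n (cycle_type n \<sigma>) permutes {1..n} \<and>
      cycle_type n (perm_of_type n (cycle_type n \<sigma>)) = cycle_type n \<sigma>"
    unfolding perm_of_type_def by (rule someI_ex)
  then show "perm_of_type n (cycle_type n \<sigma>) permutes {1..n}"
    "cycle_type n (perm_of_type n (cycle_type n \<sigma>)) = cycle_type n \<sigma>" by auto
qed

lemma perm_of_type_conjugate:
  assumes "\<sigma> permutes {1..n}"
  obtains \<pi> where "\<pi> permutes {1..n}" "\<pi> \<circ> perm_of_type n (cycle_type n \<sigma>) = \<sigma> \<circ> \<pi>"
proof -
  let ?\<rho> = "perm_of_type n (cycle_type n \<sigma>)"
  have "cycle_type_on {1..n} ?\<rho> = cycle_type_on {1..n} \<sigma>"
    using perm_of_type_cycle_type[OF assms] assms by (simp add: cycle_type_eq_cycle_type_on)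
  then show ?thesis
    using permutes_conjugate_if_cycle_type_on_eq[OF perm_of_type_cycle_type(1)[OF assms] assms] that
    by blast
qed

lemma num_fixed_trees_eq_r_fix:
  assumes "\<sigma> permutes {1..n}"
  shows "num_fixed_trees n \<sigma> = r_fix n (cycle_type n \<sigma>)"
proof -
  obtain \<pi> where "\<pi> permutes {1..n}" "\<pi> \<circ> perm_of_type n (cycle_type n \<sigma>) = \<sigma> \<circ> \<pi>"
    using perm_of_type_conjugate[OF assms] .
  then have "num_fixed_trees n (perm_of_type n (cycle_type n \<sigma>)) = num_fixed_trees n \<sigma>"
    by (rule num_fixed_trees_conj)
  then show ?thesis by (simp add: r_fix_def num_fixed_trees_def)
qed

lemma num_fixed_trees_square:
  assumes "\<sigma> permutes {1..n}"
  shows "num_fixed_trees n (\<sigma> \<circ> \<sigma>) = r_fix n (sq_type n (cycle_type n \<sigma>))"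
proof -
  let ?\<rho> = "perm_of_type n (cycle_type n \<sigma>)"
  obtain \<pi> where \<pi>: "\<pi> permutes {1..n}" "\<pi> \<circ> ?\<rho> = \<sigma> \<circ> \<pi>"
    using perm_of_type_conjugate[OF assms] .
  then have "\<pi> \<circ> (?\<rho> \<circ> ?\<rho>) = (\<sigma> \<circ> \<sigma>) \<circ> \<pi>" by (metis comp_assoc)
  then have "num_fixed_trees n (\<sigma> \<circ> \<sigma>) = num_fixed_trees n (?\<rho> \<circ> ?\<rho>)"
    using num_fixed_trees_conj[OF \<pi>(1)] by simp
  also have "\<dots> = r_fix n (cycle_type n (?\<rho> \<circ> ?\<rho>))"
    using perm_of_type_cycle_type(1)[OF assms]
    by (intro num_fixed_trees_eq_r_fix permutes_compose)
  finally show ?thesis by (simp add: sq_type_def)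
qed

lemma card_cycle_type_class:
  assumes "lam \<in> partitions n"
  shows "card {\<sigma>. \<sigma> permutes {1..n} \<and> cycle_type n \<sigma> = lam} * z_fac lam = fact n"
proof -
  have "0 \<notin># lam" "sum_mset lam = n" using assms by (auto simp: partitions_def)
  then obtain \<rho> where \<rho>: "\<rho> permutes {1..n}" "cycle_type_on {1..n} \<rho> = lam"
    using exists_permutes_cycle_type_on by blast
  have "{\<sigma>. \<sigma> permutes {1..n} \<and> cycle_type n \<sigma> = lam}
        = {\<sigma>. \<sigma> permutes {1..n} \<and> cycle_type_on {1..n} \<sigma> = cycle_type_on {1..n} \<rho>}"
    using cycle_type_eq_cycle_type_on \<rho>(2) by auto
  then show ?thesis using card_cycle_type_on_class[OF \<rho>(1)] \<rho>(2) by simp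
qed

lemma sum_permutes_class_function:
  fixes f :: "nat multiset \<Rightarrow> real"
  shows "(\<Sum>\<sigma> | \<sigma> permutes {1..n}. f (cycle_type n \<sigma>))
         = (\<Sum>lam\<in>partitions n. fact n / z_fac lam * f lam)"
proof -
  define P where "P = {\<sigma>. \<sigma> permutes {1..n}}"
  have "(\<Sum>\<sigma>\<in>P. f (cycle_type n \<sigma>))
        = (\<Sum>lam\<in>partitions n. \<Sum>\<sigma> \<in> {\<sigma> \<in> P. cycle_type n \<sigma> = lam}. f (cycle_type n \<sigma>))"
  proof (rule sum.group[symmetric])
    show "finite P" unfolding P_def by (simp add: finite_permutations)
    show "cycle_type n ` P \<subseteq> partitions n"
    proof
      fix lam assume "lam \<in> cycle_type n ` P"
      then obtain \<sigma> where \<sigma>: "\<sigma> permutes {1..n}" and lam: "lam = cycle_type n \<sigma>"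
        by (auto simp: P_def)
      show "lam \<in> partitions n"
        unfolding lam cycle_type_eq_cycle_type_on[OF \<sigma>] by (rule cycle_type_on_in_partitions[OF \<sigma>])
    qed
  qed (rule finite_partitions)
  also have "\<dots> = (\<Sum>lam\<in>partitions n. fact n / z_fac lam * f lam)"
  proof (rule sum.cong[OF refl])
    fix lam assume lam: "lam \<in> partitions n"
    have "real (card {\<sigma> \<in> P. cycle_type n \<sigma> = lam}) * z_fac lam = fact n"
      using arg_cong[OF card_cycle_type_class[OF lam], of real] by (simp add: P_def)
    moreover have "z_fac lam > 0" using lam by (intro z_fac_pos) (auto simp: partitions_def)
    ultimately have "real (card {\<sigma> \<in> P. cycle_type n \<sigma> = lam}) = fact n / z_fac lam"
      by (simp add: eq_divide_eq)
    then show "(\<Sum>\<sigma> \<in> {\<sigma> \<in> P. cycle_type n \<sigma> = lam}. f (cycle_type n \<sigma>)) = fact n / z_fac lam * f lam"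
      by simp
  qed
  finally show ?thesis by (simp add: P_def)
qed

theorem mainTheorem1:
  fixes n :: nat
  assumes "n \<ge> 1"
  shows "real (num_tanglegrams n) =
    1/2 * (\<Sum>lam\<in>partitions n. real (r_fix n lam) ^ 2 / real (z_fac lam))
  + 1/2 * (\<Sum>lam\<in>partitions n. real (r_fix n (sq_type n lam)) / real (z_fac lam))"
proof -
  define h where "h lam = real (r_fix n lam) ^ 2 + real (r_fix n (sq_type n lam))" for lam
  have "real (num_tanglegrams n) * fact n
        = (\<Sum>\<sigma> | \<sigma> permutes {1..n}. real (card {M \<in> TG n. image_mset (act \<sigma>) M = M}))"
    using arg_cong[OF num_tanglegrams_burnside, of real] by simp
  then have "2 * real (num_tanglegrams n) * fact n
        = (\<Sum>\<sigma> | \<sigma> permutes {1..n}. real (2 * card {M \<in> TG n. image_mset (act \<sigma>) M = M}))"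
    by (simp add: sum_distrib_left[symmetric] mult.assoc)
  also have "\<dots> = (\<Sum>\<sigma> | \<sigma> permutes {1..n}. h (cycle_type n \<sigma>))"
    by (rule sum.cong)
      (simp_all add: card_fixed_tanglegrams num_fixed_trees_square num_fixed_trees_eq_r_fix h_def)
  also have "\<dots> = (\<Sum>lam\<in>partitions n. h lam / z_fac lam) * fact n"
    unfolding sum_permutes_class_function sum_distrib_right by (simp add: mult.commute)
  finally have "2 * real (num_tanglegrams n) = (\<Sum>lam\<in>partitions n. h lam / z_fac lam)"
    by simp
  then show ?thesis by (simp add: h_def add_divide_distrib sum.distrib)
qed

end
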